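(* Let $\lambda=\lambda(d)>0$ be any function of $d$ that is bounded above by a constant. Then there is a function $\varepsilon(d)\to0$ as $d\to\infty$ such that for every $d$ and every triangle-free graph $G$ on $n$ vertices with maximum degree $d$, \[ \frac1n\overline\alpha_G(\lambda)\;\ge\;(1-\varepsilon(d))\,\alpha_{T_d}(\lambda). \]
   Context: For a graph $G$ and $\lambda>0$, $\overline\alpha_G(\lambda)=\lambda P_G'(\lambda)/P_G(\lambda)$ where $P_G(\lambda)=\sum_J\lambda^{|J|}$ over all independent sets $J$ of $G$; it is the expected size of an independent set drawn from the hard-core model $\Pr[J]=\lambda^{|J|}/P_G(\lambda)$. For an integer $d\ge2$ and $\lambda>0$, $\alpha_{T_d}(\lambda)$ denotes the unique solution $\alpha\in(0,1/2)$ of $\lambda=\frac{\alpha}{1-\alpha}\left(\frac{1-\alpha}{1-2\alpha}\right)^d$. *)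

theory Defs
  imports "HOL-Analysis.Analysis"
begin

text \<open>Finite simple graphs with vertices drawn from nat (every finite graph is
isomorphic to one of these): vertex set V, symmetric irreflexive edge relation E.\<close>

definition simple_graph :: "nat set \<Rightarrow> (nat \<Rightarrow> nat \<Rightarrow> bool) \<Rightarrow> bool" where
  "simple_graph V E \<longleftrightarrow> finite V \<and> (\<forall>u v. E u v \<longrightarrow> u \<in> V \<and> v \<in> V)
     \<and> (\<forall>u v. E u v \<longrightarrow> E v u) \<and> (\<forall>u. \<not> E u u)"

definition triangle_free :: "nat set \<Rightarrow> (nat \<Rightarrow> nat \<Rightarrow> bool) \<Rightarrow> bool" where
  "triangle_free V E \<longleftrightarrow> \<not> (\<exists>u\<in>V. \<exists>v\<in>V. \<exists>w\<in>V. E u v \<and> E v w \<and> E u w)"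

definition vdegree :: "nat set \<Rightarrow> (nat \<Rightarrow> nat \<Rightarrow> bool) \<Rightarrow> nat \<Rightarrow> nat" where
  "vdegree V E u = card {v \<in> V. E u v}"

definition max_degree :: "nat set \<Rightarrow> (nat \<Rightarrow> nat \<Rightarrow> bool) \<Rightarrow> nat \<Rightarrow> bool" where
  "max_degree V E d \<longleftrightarrow> (\<forall>u\<in>V. vdegree V E u \<le> d) \<and> (\<exists>u\<in>V. vdegree V E u = d)"

definition independent_set :: "nat set \<Rightarrow> (nat \<Rightarrow> nat \<Rightarrow> bool) \<Rightarrow> nat set \<Rightarrow> bool" where
  "independent_set V E J \<longleftrightarrow> J \<subseteq> V \<and> (\<forall>u\<in>J. \<forall>v\<in>J. \<not> E u v)"

definition indep_poly :: "nat set \<Rightarrow> (nat \<Rightarrow> nat \<Rightarrow> bool) \<Rightarrow> real \<Rightarrow> real" where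
  "indep_poly V E lam = (\<Sum>J \<in> {J. independent_set V E J}. lam ^ card J)"

definition alpha_bar :: "nat set \<Rightarrow> (nat \<Rightarrow> nat \<Rightarrow> bool) \<Rightarrow> real \<Rightarrow> real" where
  "alpha_bar V E lam = lam * deriv (indep_poly V E) lam / indep_poly V E lam"

text \<open>alpha_{T_d}(lambda): the unique alpha in (0,1/2) solving the tree equation.\<close>
definition alpha_T :: "nat \<Rightarrow> real \<Rightarrow> real" where
  "alpha_T d lam = (THE a. 0 < a \<and> a < 1/2 \<and>
      lam = a / (1 - a) * ((1 - a) / (1 - 2 * a)) ^ d)"

end

theory Submission
  imports Defs
begin

text \<open>Fix a vertex \<open>v\<close> and condition a hard-core sample \<open>J\<close> on its part \<open>K\<close> outside the closed
  neighbourhood of \<open>v\<close>. Since the graph is triangle-free, the \<open>Y\<close> neighbours of \<open>v\<close> not blocked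
  by \<open>K\<close> span no edge, so the conditional law of \<open>J \<inter> N[v]\<close> is explicit. Averaging over \<open>v\<close> and
  \<open>K\<close> expresses the occupancy fraction \<open>\<alpha>\<close> in two ways: \<open>\<alpha> \<ge> \<lambda>/(1+\<lambda>) E[(1+\<lambda>)^-Y]\<close>, which is
  at least \<open>\<lambda>/(1+\<lambda>) (1+\<lambda>)^-E[Y]\<close> by Jensen, and \<open>d \<alpha>\<close> controls \<open>E[Y]\<close> by counting the
  occupied neighbours of \<open>v\<close>. Eliminating \<open>E[Y]\<close> gives \<open>d\<lambda>/(1+\<lambda>) \<le> g e^g\<close> with
  \<open>g = (1+\<lambda>)\<^sup>2 d \<alpha>\<close>, while \<open>A = d \<alpha>_T(\<lambda>)\<close> satisfies \<open>A e^A \<le> \<lambda> d\<close>. Comparing the two through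
  the increasing map \<open>t \<mapsto> t e^t\<close> proves the claim for \<open>\<lambda> \<le> 1/L\<close>, \<open>L = ln (C d)\<close>; larger
  \<open>\<lambda>\<close> are reduced to \<open>1/L\<close> by monotonicity of \<open>\<alpha>\<close> in \<open>\<lambda>\<close>, losing a factor \<open>1 - 3 ln L / L\<close>.\<close>

section \<open>Analytic inequalities\<close>

lemma mult_exp_mono:
  fixes s t :: real
  assumes "0 \<le> s" "s \<le> t"
  shows "s * exp s \<le> t * exp t"
  using assms by (meson exp_ge_zero exp_le_cancel_iff mult_mono order.trans)

lemma mult_exp_le_imp_le:
  fixes s t :: real
  assumes "0 \<le> t" "s * exp s \<le> t * exp t"
  shows "s \<le> t"
proof (rule ccontr)
  assume "\<not> s \<le> t"
  then have "t * exp t \<le> t * exp s" and "t * exp s < s * exp s"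
    using assms(1) by (auto intro: mult_left_mono mult_strict_right_mono)
  with assms(2) show False by simp
qed

lemma exp_weighted_mean_le:
  fixes w t :: "'p \<Rightarrow> real"
  assumes "finite P" "\<And>p. p \<in> P \<Longrightarrow> 0 \<le> w p" "0 < sum w P"
  shows "sum w P * exp ((\<Sum>p\<in>P. w p * t p) / sum w P) \<le> (\<Sum>p\<in>P. w p * exp (t p))"
proof -
  define m where "m = (\<Sum>p\<in>P. w p * t p) / sum w P"
  have "sum w P * exp m = exp m * (sum w P + ((\<Sum>p\<in>P. w p * t p) - m * sum w P))"
    using assms(3) by (simp add: m_def)
  also have "\<dots> = (\<Sum>p\<in>P. w p * (exp m * (1 + (t p - m))))"
    by (simp add: sum_distrib_left sum_distrib_right sum.distrib sum_subtractf algebra_simps)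
  also have "\<dots> \<le> (\<Sum>p\<in>P. w p * exp (t p))"
  proof (rule sum_mono)
    fix p assume "p \<in> P"
    have "exp m * (1 + (t p - m)) \<le> exp m * exp (t p - m)"
      by (intro mult_left_mono exp_ge_add_one_self) simp
    then show "w p * (exp m * (1 + (t p - m))) \<le> w p * exp (t p)"
      using assms(2)[OF \<open>p \<in> P\<close>] by (simp add: mult_left_mono exp_diff)
  qed
  finally show ?thesis by (simp add: m_def)
qed

lemma xexp_bound_of_occupancy_tradeoff:
  fixes x d \<alpha> \<tau> :: real
  defines "\<rho> \<equiv> x / (1 + x)"
  assumes x: "0 < x" and d: "0 \<le> d"
    and convex: "\<rho> * exp (- ln (1 + x) * \<tau>) \<le> \<alpha>"
    and linear: "\<rho> * \<tau> \<le> d * (1 + \<rho>) * \<alpha>"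
  shows "d * \<rho> \<le> (1 + x)\<^sup>2 * d * \<alpha> * exp ((1 + x)\<^sup>2 * d * \<alpha>)"
proof -
  define c where "c = ln (1 + x)"
  define k where "k = c * (1 + \<rho>) / \<rho>"
  have \<rho>: "0 < \<rho>" "\<rho> \<le> x" using x by (auto simp: \<rho>_def field_simps)
  have c: "\<rho> \<le> c" "c \<le> x"
    using ln_add1_ge[of x] ln_add_one_self_le_self[of x] x by (simp_all add: \<rho>_def c_def add.commute)
  have "0 < \<rho> * exp (- c * \<tau>)" using \<rho> by simp
  then have \<alpha>: "0 \<le> \<alpha>" using convex by (simp add: c_def)
  have k: "1 \<le> k" "k \<le> (1 + x)\<^sup>2"
  proof -
    have "c * (1 + x) \<le> x * (1 + x)" using c x by (intro mult_right_mono) auto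
    then have h: "1 \<le> c / \<rho>" "c / \<rho> \<le> 1 + x"
      using c \<rho> x by (auto simp: \<rho>_def field_simps)
    have "1 * 1 \<le> c / \<rho> * (1 + \<rho>)" "c / \<rho> * (1 + \<rho>) \<le> (1 + x) * (1 + x)"
      by (rule mult_mono; use h \<rho> in auto)+
    then show "1 \<le> k" "k \<le> (1 + x)\<^sup>2" by (simp_all add: k_def power2_eq_square)
  qed
  have "c * \<tau> = c / \<rho> * (\<rho> * \<tau>)" using \<rho> by simp
  also have "\<dots> \<le> c / \<rho> * (d * (1 + \<rho>) * \<alpha>)"
    using linear c \<rho> by (intro mult_left_mono) auto
  also have "\<dots> = k * (d * \<alpha>)" by (simp add: k_def)
  finally have "\<rho> * exp (- (k * (d * \<alpha>))) \<le> \<rho> * exp (- c * \<tau>)"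
    using \<rho> by (intro mult_left_mono) auto
  then have "\<rho> * exp (- (k * (d * \<alpha>))) \<le> \<alpha>" using convex by (simp add: c_def)
  then have "d * \<rho> * exp (- (k * (d * \<alpha>))) * exp (k * (d * \<alpha>)) \<le> d * \<alpha> * exp (k * (d * \<alpha>))"
    using d by (intro mult_right_mono) (auto simp: mult.assoc intro: mult_left_mono)
  then have "d * \<rho> \<le> d * \<alpha> * exp (k * (d * \<alpha>))"
    by (simp add: mult.assoc flip: exp_add)
  then have "k * (d * \<rho>) \<le> k * (d * \<alpha>) * exp (k * (d * \<alpha>))"
    using k by (simp add: mult.assoc mult_left_mono)
  moreover have "d * \<rho> \<le> k * (d * \<rho>)"
    using k d \<rho> mult_right_mono[of 1 k "d * \<rho>"] by simp
  moreover have "k * (d * \<alpha>) \<le> (1 + x)\<^sup>2 * d * \<alpha>"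
    using k d \<alpha> by (simp add: mult.assoc mult_right_mono)
  then have "k * (d * \<alpha>) * exp (k * (d * \<alpha>)) \<le> (1 + x)\<^sup>2 * d * \<alpha> * exp ((1 + x)\<^sup>2 * d * \<alpha>)"
    using k d \<alpha> by (intro mult_exp_mono) auto
  ultimately show ?thesis by linarith
qed

text \<open>In the application \<open>p = (v, K)\<close> ranges over the local views: \<open>a p = x ^ card K\<close> and \<open>Y p\<close>
  is the number of neighbours of \<open>v\<close> not blocked by \<open>K\<close>. Then \<open>W = card V * P(x)\<close> and
  \<open>S = x P'(x)\<close>, so \<open>S / W\<close> is the occupancy fraction.\<close>
lemma xexp_bound_of_local_views:
  fixes P :: "'p set" and a :: "'p \<Rightarrow> real" and Y :: "'p \<Rightarrow> nat" and x :: real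
  defines "W \<equiv> \<Sum>p\<in>P. a p * (x + (1 + x) ^ Y p)"
    and "S \<equiv> \<Sum>p\<in>P. a p * x"
  assumes P: "finite P" and x: "0 < x" and a: "\<And>p. p \<in> P \<Longrightarrow> 0 \<le> a p"
    and Y: "\<And>p. p \<in> P \<Longrightarrow> Y p \<le> d" and W: "0 < W"
    and neighbours: "(\<Sum>p\<in>P. a p * (Y p * x * (1 + x) ^ Y p)) \<le> (1 + x) * d * S"
  shows "d * (x / (1 + x)) \<le> (1 + x)\<^sup>2 * d * (S / W) * exp ((1 + x)\<^sup>2 * d * (S / W))"
proof -
  define \<rho> where "\<rho> = x / (1 + x)"
  define w where "w p = a p * (x + (1 + x) ^ Y p)" for p
  define \<tau> where "\<tau> = (\<Sum>p\<in>P. w p * Y p) / W"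
  have \<rho>: "0 < \<rho>" using x by (simp add: \<rho>_def)
  have w_nonneg: "\<And>p. p \<in> P \<Longrightarrow> 0 \<le> w p" using a x by (simp add: w_def)
  have W_w: "W = sum w P" by (simp add: W_def w_def)
  have "\<rho> * exp (- ln (1 + x) * \<tau>) \<le> S / W"
  proof -
    have "W * exp (- ln (1 + x) * \<tau>) \<le> (\<Sum>p\<in>P. w p * exp (- ln (1 + x) * Y p))"
      using exp_weighted_mean_le[where w = w and t = "\<lambda>p. - ln (1 + x) * Y p", OF P w_nonneg] W
      by (simp add: W_w \<tau>_def sum_distrib_left mult_ac flip: sum_divide_distrib)
    also have "\<rho> * \<dots> \<le> S"
      unfolding sum_distrib_left S_def
    proof (rule sum_mono)
      fix p assume "p \<in> P"
      have B: "1 \<le> (1 + x) ^ Y p" using x by simp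
      have "exp (- ln (1 + x) * Y p) = 1 / (1 + x) ^ Y p"
        using x by (simp add: exp_minus exp_of_nat_mult mult.commute inverse_eq_divide)
      then have "\<rho> * (w p * exp (- ln (1 + x) * Y p)) = \<rho> * a p * (x / (1 + x) ^ Y p + 1)"
        using B x by (simp add: w_def divide_simps)
      also have "\<dots> \<le> \<rho> * a p * (x + 1)"
        using \<rho> a[OF \<open>p \<in> P\<close>] x B by (intro mult_left_mono) (auto simp: divide_le_eq)
      also have "\<dots> = a p * x" using x by (simp add: \<rho>_def add.commute)
      finally show "\<rho> * (w p * exp (- ln (1 + x) * Y p)) \<le> a p * x" .
    qed
    finally show ?thesis using \<rho> W by (simp add: field_simps mult_left_mono)
  qed
  moreover have "\<rho> * \<tau> \<le> d * (1 + \<rho>) * (S / W)"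
  proof -
    have "\<rho> * (\<Sum>p\<in>P. w p * Y p)
        = (\<Sum>p\<in>P. a p * (Y p * x * (1 + x) ^ Y p)) / (1 + x) + \<rho> * (\<Sum>p\<in>P. Y p * (a p * x))"
    proof -
      have "\<rho> * (w p * Y p) = a p * (Y p * x * (1 + x) ^ Y p) / (1 + x) + \<rho> * (Y p * (a p * x))"
        for p by (simp add: w_def \<rho>_def algebra_simps add_divide_distrib)
      then show ?thesis by (simp add: sum_distrib_left sum_divide_distrib sum.distrib)
    qed
    also have "\<dots> \<le> d * S + \<rho> * (d * S)"
    proof (intro add_mono mult_left_mono)
      show "(\<Sum>p\<in>P. a p * (Y p * x * (1 + x) ^ Y p)) / (1 + x) \<le> d * S"
        using neighbours x by (simp add: divide_le_eq mult_ac)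
      show "(\<Sum>p\<in>P. Y p * (a p * x)) \<le> d * S"
        unfolding S_def sum_distrib_left using a x Y by (intro sum_mono mult_right_mono) auto
    qed (use \<rho> in simp)
    finally show ?thesis using W by (simp add: \<tau>_def field_simps)
  qed
  ultimately show ?thesis
    using xexp_bound_of_occupancy_tradeoff[where \<alpha> = "S / W" and \<tau> = \<tau>, OF x] by (simp add: \<rho>_def)
qed

section \<open>Local views in triangle-free graphs\<close>

lemma sum_pow_card_Pow:
  fixes x :: "'a :: comm_semiring_1"
  assumes "finite U"
  shows "(\<Sum>S\<in>Pow U. x ^ card S) = (1 + x) ^ card U"
  using prod_add[OF assms, of "\<lambda>_. x" "\<lambda>_. 1"] by (simp add: add.commute)

lemma sum_card_mult_pow_card_Pow:
  fixes x :: real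
  assumes "finite U"
  shows "(1 + x) * (\<Sum>S\<in>Pow U. card S * x ^ card S) = card U * x * (1 + x) ^ card U"
  using assms
proof (induction U rule: finite_induct)
  case (insert a U)
  have inj: "inj_on (insert a) (Pow U)" using insert by (auto simp: inj_on_def)
  have disj: "Pow U \<inter> insert a ` Pow U = {}" using insert by auto
  have fin: "finite (Pow U)" using insert by simp
  have "(\<Sum>S\<in>Pow (insert a U). card S * x ^ card S)
      = (\<Sum>S\<in>Pow U. card S * x ^ card S) + (\<Sum>S\<in>insert a ` Pow U. card S * x ^ card S)"
    unfolding Pow_insert by (rule sum.union_disjoint[OF fin _ disj]) (use fin in blast)
  also have "(\<Sum>S\<in>insert a ` Pow U. card S * x ^ card S)
      = (\<Sum>S\<in>Pow U. x * (card S * x ^ card S) + x * x ^ card S)"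
    unfolding sum.reindex[OF inj] comp_def
  proof (rule sum.cong)
    fix S assume "S \<in> Pow U"
    then have "finite S" "a \<notin> S" using insert finite_subset by auto
    then show "card (insert a S) * x ^ card (insert a S) = x * (card S * x ^ card S) + x * x ^ card S"
      by (simp add: algebra_simps)
  qed simp
  also have "\<dots> = x * (\<Sum>S\<in>Pow U. card S * x ^ card S) + x * (1 + x) ^ card U"
    by (simp add: sum_pow_card_Pow[OF insert(1)] sum.distrib flip: sum_distrib_left)
  finally show ?case using insert by (simp add: algebra_simps)
qed simp

definition neighbours :: "nat set \<Rightarrow> (nat \<Rightarrow> nat \<Rightarrow> bool) \<Rightarrow> nat \<Rightarrow> nat set" where
  "neighbours V E v = {u \<in> V. E v u}"

abbreviation independent_sets :: "nat set \<Rightarrow> (nat \<Rightarrow> nat \<Rightarrow> bool) \<Rightarrow> nat set set" where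
  "independent_sets V E \<equiv> {J. independent_set V E J}"

definition outer_independent_sets :: "nat set \<Rightarrow> (nat \<Rightarrow> nat \<Rightarrow> bool) \<Rightarrow> nat \<Rightarrow> nat set set" where
  "outer_independent_sets V E v =
     {K. independent_set V E K \<and> K \<inter> insert v (neighbours V E v) = {}}"

definition uncovered :: "nat set \<Rightarrow> (nat \<Rightarrow> nat \<Rightarrow> bool) \<Rightarrow> nat \<Rightarrow> nat set \<Rightarrow> nat set" where
  "uncovered V E v K = {u \<in> neighbours V E v. \<forall>w\<in>K. \<not> E u w}"

lemma finite_independent_sets: "finite V \<Longrightarrow> finite (independent_sets V E)"
  by (rule finite_subset[of _ "Pow V"]) (auto simp: independent_set_def)

lemma finite_outer_independent_sets: "finite V \<Longrightarrow> finite (outer_independent_sets V E v)"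
  by (rule finite_subset[of _ "Pow V"]) (auto simp: outer_independent_sets_def independent_set_def)

lemma uncovered_subset_neighbours: "uncovered V E v K \<subseteq> neighbours V E v"
  by (auto simp: uncovered_def)

lemma finite_uncovered: "finite V \<Longrightarrow> finite (uncovered V E v K)"
  by (rule finite_subset[of _ V]) (auto simp: uncovered_def neighbours_def)

lemma card_uncovered_le_vdegree: "finite V \<Longrightarrow> card (uncovered V E v K) \<le> vdegree V E v"
  unfolding vdegree_def
  by (rule card_mono) (auto simp: uncovered_def neighbours_def)

lemma not_in_neighbours: "simple_graph V E \<Longrightarrow> v \<notin> neighbours V E v"
  by (simp add: neighbours_def simple_graph_def)

lemma outer_independent_setsD:
  assumes "K \<in> outer_independent_sets V E v"
  shows "independent_set V E K" "v \<notin> K" "K \<inter> neighbours V E v = {}"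
  using assms by (auto simp: outer_independent_sets_def)

lemma independent_sets_fiber:
  assumes G: "simple_graph V E" and T: "triangle_free V E" and v: "v \<in> V"
    and K: "K \<in> outer_independent_sets V E v"
  shows "{J \<in> independent_sets V E. J - insert v (neighbours V E v) = K}
       = insert (insert v K) ((\<union>) K ` Pow (uncovered V E v K))"
proof (intro equalityI subsetI)
  fix J assume "J \<in> {J \<in> independent_sets V E. J - insert v (neighbours V E v) = K}"
  then have J: "independent_set V E J" and JK: "J - insert v (neighbours V E v) = K" by auto
  show "J \<in> insert (insert v K) ((\<union>) K ` Pow (uncovered V E v K))"
  proof (cases "v \<in> J")
    case True
    then have "J \<inter> neighbours V E v = {}" using J by (auto simp: independent_set_def neighbours_def)
    then have "J = insert v K" using True JK by blast
    then show ?thesis by simp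
  next
    case False
    then have "J = K \<union> (J \<inter> neighbours V E v)" using JK by blast
    moreover have "J \<inter> neighbours V E v \<subseteq> uncovered V E v K"
      using J JK by (auto simp: independent_set_def uncovered_def)
    ultimately show ?thesis by blast
  qed
next
  have sym: "\<And>a b. E a b \<Longrightarrow> E b a" and irrefl: "\<And>a. \<not> E a a"
    using G by (auto simp: simple_graph_def)
  have K_indep: "independent_set V E K" and K_off: "K \<inter> insert v (neighbours V E v) = {}"
    using K by (auto simp: outer_independent_sets_def)
  fix J assume "J \<in> insert (insert v K) ((\<union>) K ` Pow (uncovered V E v K))"
  then consider "J = insert v K" | S where "S \<subseteq> uncovered V E v K" "J = K \<union> S" by auto
  then show "J \<in> {J \<in> independent_sets V E. J - insert v (neighbours V E v) = K}"
  proof cases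
    case 1
    have "\<not> E v w" if "w \<in> K" for w
      using that K_indep K_off by (auto simp: independent_set_def neighbours_def)
    then have "independent_set V E J"
      using 1 K_indep v irrefl sym by (auto simp: independent_set_def)
    then show ?thesis using 1 K_off not_in_neighbours[OF G] by auto
  next
    case (2 S)
    then have SN: "S \<subseteq> neighbours V E v" using uncovered_subset_neighbours by blast
    \<comment> \<open>Any set of neighbours of \<open>v\<close> is independent, since the graph is triangle-free.\<close>
    have "\<not> E a b" if "a \<in> S" "b \<in> S" for a b
      using that SN T v unfolding triangle_free_def neighbours_def by blast
    moreover have "\<not> E a b \<and> \<not> E b a" if "a \<in> S" "b \<in> K" for a b
      using that 2 sym unfolding uncovered_def by blast
    ultimately have "independent_set V E J"
      using 2 K_indep SN by (auto simp: independent_set_def neighbours_def)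
    then show ?thesis using 2 K_off SN by auto
  qed
qed

lemma sum_independent_sets_local_view:
  assumes G: "simple_graph V E" and T: "triangle_free V E" and v: "v \<in> V"
  shows "(\<Sum>J\<in>independent_sets V E. f J)
       = (\<Sum>K\<in>outer_independent_sets V E v.
            f (insert v K) + (\<Sum>S\<in>Pow (uncovered V E v K). f (K \<union> S)))"
proof -
  have fin: "finite V" using G by (simp add: simple_graph_def)
  have image: "(\<lambda>J. J - insert v (neighbours V E v)) ` independent_sets V E
      \<subseteq> outer_independent_sets V E v"
    by (auto simp: outer_independent_sets_def independent_set_def)
  have "(\<Sum>J\<in>independent_sets V E. f J)
      = (\<Sum>K\<in>outer_independent_sets V E v.
           sum f {J \<in> independent_sets V E. J - insert v (neighbours V E v) = K})"
    using sum.group[OF finite_independent_sets[OF fin] finite_outer_independent_sets[OF fin] image,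
        of f]
    by simp
  also have "\<dots> = (\<Sum>K\<in>outer_independent_sets V E v.
            f (insert v K) + (\<Sum>S\<in>Pow (uncovered V E v K). f (K \<union> S)))"
  proof (rule sum.cong)
    fix K assume K: "K \<in> outer_independent_sets V E v"
    have disj: "K \<inter> uncovered V E v K = {}"
      using outer_independent_setsD(3)[OF K] uncovered_subset_neighbours by blast
    then have "inj_on ((\<union>) K) (Pow (uncovered V E v K))"
      by (auto simp: inj_on_def)
    moreover have "insert v K \<notin> (\<union>) K ` Pow (uncovered V E v K)"
      using outer_independent_setsD(2)[OF K] not_in_neighbours[OF G] uncovered_subset_neighbours
      by blast
    ultimately show "sum f {J \<in> independent_sets V E. J - insert v (neighbours V E v) = K}
        = f (insert v K) + (\<Sum>S\<in>Pow (uncovered V E v K). f (K \<union> S))"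
      unfolding independent_sets_fiber[OF G T v K] by (simp add: finite_uncovered[OF fin] sum.reindex)
  qed simp
  finally show ?thesis .
qed

lemma outer_independent_set_finite:
  "simple_graph V E \<Longrightarrow> K \<in> outer_independent_sets V E v \<Longrightarrow> finite K"
  by (auto simp: simple_graph_def outer_independent_sets_def independent_set_def
      intro: finite_subset)

lemma card_insert_outer:
  "simple_graph V E \<Longrightarrow> K \<in> outer_independent_sets V E v \<Longrightarrow> card (insert v K) = Suc (card K)"
  by (simp add: outer_independent_set_finite outer_independent_setsD(2))

lemma card_union_uncovered:
  assumes G: "simple_graph V E" and K: "K \<in> outer_independent_sets V E v"
    and S: "S \<subseteq> uncovered V E v K"
  shows "card (K \<union> S) = card K + card S"
proof (rule card_Un_disjoint)
  show "finite K" using G K by (rule outer_independent_set_finite)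
  show "finite S"
    using G S finite_uncovered by (auto simp: simple_graph_def intro: finite_subset)
  show "K \<inter> S = {}"
    using outer_independent_setsD(3)[OF K] S uncovered_subset_neighbours by blast
qed

lemma indep_poly_local_view:
  fixes x :: real
  assumes G: "simple_graph V E" and T: "triangle_free V E" and v: "v \<in> V"
  shows "indep_poly V E x
       = (\<Sum>K\<in>outer_independent_sets V E v. x ^ card K * (x + (1 + x) ^ card (uncovered V E v K)))"
  unfolding indep_poly_def sum_independent_sets_local_view[OF G T v]
proof (rule sum.cong)
  fix K assume K: "K \<in> outer_independent_sets V E v"
  have fin: "finite V" using G by (simp add: simple_graph_def)
  have "(\<Sum>S\<in>Pow (uncovered V E v K). x ^ card (K \<union> S))
      = x ^ card K * (\<Sum>S\<in>Pow (uncovered V E v K). x ^ card S)"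
    unfolding sum_distrib_left
    by (rule sum.cong) (simp_all add: card_union_uncovered[OF G K] power_add)
  then show "x ^ card (insert v K) + (\<Sum>S\<in>Pow (uncovered V E v K). x ^ card (K \<union> S))
      = x ^ card K * (x + (1 + x) ^ card (uncovered V E v K))"
    by (simp add: card_insert_outer[OF G K] sum_pow_card_Pow[OF finite_uncovered[OF fin]]
        algebra_simps)
qed simp

lemma occupied_weight_local_view:
  fixes x :: real
  assumes G: "simple_graph V E" and T: "triangle_free V E" and v: "v \<in> V"
  shows "(\<Sum>J\<in>independent_sets V E. if v \<in> J then x ^ card J else 0)
       = (\<Sum>K\<in>outer_independent_sets V E v. x ^ card K * x)"
  unfolding sum_independent_sets_local_view[OF G T v]
proof (rule sum.cong)
  fix K assume K: "K \<in> outer_independent_sets V E v"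
  have "v \<notin> K \<union> S" if "S \<subseteq> uncovered V E v K" for S
    using that outer_independent_setsD(2)[OF K] not_in_neighbours[OF G]
      uncovered_subset_neighbours by blast
  then show "(if v \<in> insert v K then x ^ card (insert v K) else 0)
      + (\<Sum>S\<in>Pow (uncovered V E v K). if v \<in> K \<union> S then x ^ card (K \<union> S) else 0)
      = x ^ card K * x"
    by (simp add: card_insert_outer[OF G K] mult.commute)
qed simp

lemma occupied_neighbours_weight_local_view:
  fixes x :: real
  assumes G: "simple_graph V E" and T: "triangle_free V E" and v: "v \<in> V"
  shows "(1 + x) * (\<Sum>J\<in>independent_sets V E. card (J \<inter> neighbours V E v) * x ^ card J)
       = (\<Sum>K\<in>outer_independent_sets V E v.
            x ^ card K * (card (uncovered V E v K) * x * (1 + x) ^ card (uncovered V E v K)))"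
  unfolding sum_independent_sets_local_view[OF G T v] sum_distrib_left
proof (rule sum.cong)
  fix K assume K: "K \<in> outer_independent_sets V E v"
  have fin: "finite V" using G by (simp add: simple_graph_def)
  have "insert v K \<inter> neighbours V E v = {}"
    using outer_independent_setsD(3)[OF K] not_in_neighbours[OF G] by blast
  moreover have "(K \<union> S) \<inter> neighbours V E v = S" if "S \<subseteq> uncovered V E v K" for S
    using that outer_independent_setsD(3)[OF K] uncovered_subset_neighbours by blast
  ultimately have "card (insert v K \<inter> neighbours V E v) * x ^ card (insert v K)
      + (\<Sum>S\<in>Pow (uncovered V E v K). card ((K \<union> S) \<inter> neighbours V E v) * x ^ card (K \<union> S))
      = x ^ card K * (\<Sum>S\<in>Pow (uncovered V E v K). card S * x ^ card S)"
    unfolding sum_distrib_left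
    by (auto simp: card_union_uncovered[OF G K] power_add mult_ac intro!: sum.cong)
  moreover have "(1 + x) * (x ^ card K * (\<Sum>S\<in>Pow (uncovered V E v K). card S * x ^ card S))
      = x ^ card K * (card (uncovered V E v K) * x * (1 + x) ^ card (uncovered V E v K))"
    unfolding mult.left_commute[of "1 + x"] sum_card_mult_pow_card_Pow[OF finite_uncovered[OF fin]] ..
  ultimately show "(1 + x) * (card (insert v K \<inter> neighbours V E v) * x ^ card (insert v K)
      + (\<Sum>S\<in>Pow (uncovered V E v K). card ((K \<union> S) \<inter> neighbours V E v) * x ^ card (K \<union> S)))
      = x ^ card K * (card (uncovered V E v K) * x * (1 + x) ^ card (uncovered V E v K))"
    by simp
qed simp

section \<open>The occupancy fraction\<close>

lemma sum_vertices_occupied_weight: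
  fixes x :: real
  assumes "finite V"
  shows "(\<Sum>v\<in>V. \<Sum>J\<in>independent_sets V E. if v \<in> J then x ^ card J else 0)
       = (\<Sum>J\<in>independent_sets V E. card J * x ^ card J)"
proof -
  have "(\<Sum>v\<in>V. \<Sum>J\<in>independent_sets V E. if v \<in> J then x ^ card J else 0)
      = (\<Sum>J\<in>independent_sets V E. \<Sum>v\<in>V. if v \<in> J then x ^ card J else 0)"
    by (rule sum.swap)
  also have "\<dots> = (\<Sum>J\<in>independent_sets V E. card J * x ^ card J)"
  proof (rule sum.cong)
    fix J assume "J \<in> independent_sets V E"
    then have "V \<inter> J = J" by (auto simp: independent_set_def)
    then show "(\<Sum>v\<in>V. if v \<in> J then x ^ card J else 0) = card J * x ^ card J"
      using sum.inter_restrict[OF assms, of "\<lambda>_. x ^ card J" J] by simp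
  qed simp
  finally show ?thesis .
qed

lemma sum_card_neighbours_le:
  assumes G: "simple_graph V E" and deg: "\<forall>u\<in>V. vdegree V E u \<le> d" and J: "J \<subseteq> V"
  shows "(\<Sum>v\<in>V. card (J \<inter> neighbours V E v)) \<le> d * card J"
proof -
  have fin: "finite V" "finite J" using G J by (auto simp: simple_graph_def intro: finite_subset)
  have "(\<Sum>v\<in>V. card (J \<inter> neighbours V E v)) = (\<Sum>v\<in>V. \<Sum>u\<in>J. if E v u then 1 else 0)"
  proof (rule sum.cong)
    fix v
    have "J \<inter> neighbours V E v = {u \<in> J. E v u}" using J by (auto simp: neighbours_def)
    then show "card (J \<inter> neighbours V E v) = (\<Sum>u\<in>J. if E v u then 1 else 0)"
      using fin by (simp add: sum.If_cases Int_def)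
  qed simp
  also have "\<dots> = (\<Sum>u\<in>J. \<Sum>v\<in>V. if E v u then 1 else 0)" by (rule sum.swap)
  also have "\<dots> \<le> (\<Sum>u\<in>J. d)"
  proof (rule sum_mono)
    fix u assume "u \<in> J"
    have "{v \<in> V. E v u} = {v \<in> V. E u v}" using G by (auto simp: simple_graph_def)
    then have "(\<Sum>v\<in>V. if E v u then 1 else 0) = vdegree V E u"
      using fin by (simp add: sum.If_cases Int_def vdegree_def)
    then show "(\<Sum>v\<in>V. if E v u then 1 else 0) \<le> d" using deg J \<open>u \<in> J\<close> by auto
  qed
  finally show ?thesis by (simp add: mult.commute)
qed

lemma sum_vertices_occupied_neighbours_weight_le:
  fixes x :: real
  assumes G: "simple_graph V E" and deg: "\<forall>u\<in>V. vdegree V E u \<le> d" and x: "0 \<le> x"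
  shows "(\<Sum>v\<in>V. \<Sum>J\<in>independent_sets V E. card (J \<inter> neighbours V E v) * x ^ card J)
       \<le> d * (\<Sum>J\<in>independent_sets V E. card J * x ^ card J)"
proof -
  have "(\<Sum>v\<in>V. \<Sum>J\<in>independent_sets V E. card (J \<inter> neighbours V E v) * x ^ card J)
      = (\<Sum>J\<in>independent_sets V E. (\<Sum>v\<in>V. card (J \<inter> neighbours V E v)) * x ^ card J)"
    by (subst sum.swap) (simp add: sum_distrib_right)
  also have "\<dots> \<le> (\<Sum>J\<in>independent_sets V E. d * (card J * x ^ card J))"
  proof (rule sum_mono)
    fix J assume "J \<in> independent_sets V E"
    then have "(\<Sum>v\<in>V. card (J \<inter> neighbours V E v)) \<le> d * card J"
      using sum_card_neighbours_le[OF G deg] by (simp add: independent_set_def)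
    then have "real (\<Sum>v\<in>V. card (J \<inter> neighbours V E v)) * x ^ card J \<le> real (d * card J) * x ^ card J"
      using x by (intro mult_right_mono) (simp_all only: of_nat_le_iff zero_le_power)
    then show "real (\<Sum>v\<in>V. card (J \<inter> neighbours V E v)) * x ^ card J \<le> d * (card J * x ^ card J)"
      by simp
  qed
  finally show ?thesis by (simp add: sum_distrib_left)
qed

lemma sum_local_views_uncovered_le:
  fixes x :: real
  assumes G: "simple_graph V E" and T: "triangle_free V E"
    and deg: "\<forall>u\<in>V. vdegree V E u \<le> d" and x: "0 < x"
  shows "(\<Sum>v\<in>V. \<Sum>K\<in>outer_independent_sets V E v.
            x ^ card K * (card (uncovered V E v K) * x * (1 + x) ^ card (uncovered V E v K)))
       \<le> (1 + x) * d * (\<Sum>J\<in>independent_sets V E. card J * x ^ card J)"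
proof -
  have "(\<Sum>v\<in>V. \<Sum>K\<in>outer_independent_sets V E v.
            x ^ card K * (card (uncovered V E v K) * x * (1 + x) ^ card (uncovered V E v K)))
      = (\<Sum>v\<in>V. (1 + x) * (\<Sum>J\<in>independent_sets V E. card (J \<inter> neighbours V E v) * x ^ card J))"
    by (rule sum.cong[OF refl]) (simp add: occupied_neighbours_weight_local_view[OF G T])
  also have "\<dots> = (1 + x) * (\<Sum>v\<in>V. \<Sum>J\<in>independent_sets V E. card (J \<inter> neighbours V E v) * x ^ card J)"
    by (rule sum_distrib_left[symmetric])
  also have "\<dots> \<le> (1 + x) * d * (\<Sum>J\<in>independent_sets V E. card J * x ^ card J)"
    using sum_vertices_occupied_neighbours_weight_le[OF G deg, of x] x
    by (simp add: mult.assoc mult_left_mono)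
  finally show ?thesis .
qed

lemma indep_poly_ge_1:
  fixes x :: real
  assumes "finite V" "0 \<le> x"
  shows "1 \<le> indep_poly V E x"
proof -
  have "(\<Sum>J\<in>{{} :: nat set}. x ^ card J) \<le> (\<Sum>J\<in>independent_sets V E. x ^ card J)"
    using assms by (intro sum_mono2 finite_independent_sets) (auto simp: independent_set_def)
  then show ?thesis by (simp add: indep_poly_def)
qed

lemma alpha_bar_eq:
  fixes x :: real
  assumes "finite V"
  shows "alpha_bar V E x = (\<Sum>J\<in>independent_sets V E. card J * x ^ card J) / indep_poly V E x"
proof -
  have "(indep_poly V E has_field_derivative (\<Sum>J\<in>independent_sets V E. card J * x ^ (card J - 1)))
      (at x)"
    unfolding indep_poly_def[abs_def] by (rule DERIV_sum) (auto intro!: derivative_eq_intros)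
  then have "x * deriv (indep_poly V E) x = (\<Sum>J\<in>independent_sets V E. x * (card J * x ^ (card J - 1)))"
    by (simp add: DERIV_imp_deriv sum_distrib_left)
  also have "\<dots> = (\<Sum>J\<in>independent_sets V E. card J * x ^ card J)"
  proof (rule sum.cong)
    show "x * (card J * x ^ (card J - 1)) = card J * x ^ card J" for J :: "nat set"
      by (cases "card J") auto
  qed simp
  finally show ?thesis by (simp add: alpha_bar_def)
qed

lemma occupancy_fraction_xexp_bound:
  fixes x :: real
  assumes G: "simple_graph V E" and T: "triangle_free V E"
    and deg: "\<forall>u\<in>V. vdegree V E u \<le> d" and V: "V \<noteq> {}" and x: "0 < x"
  defines "\<alpha> \<equiv> alpha_bar V E x / card V"
  shows "d * (x / (1 + x)) \<le> (1 + x)\<^sup>2 * d * \<alpha> * exp ((1 + x)\<^sup>2 * d * \<alpha>)"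
proof -
  have fin: "finite V" using G by (simp add: simple_graph_def)
  define P where "P = Sigma V (outer_independent_sets V E)"
  define a where "a = (\<lambda>(v::nat, K::nat set). x ^ card K)"
  define Y where "Y = (\<lambda>(v, K). card (uncovered V E v K))"
  have sum_P: "(\<Sum>p\<in>P. h p) = (\<Sum>v\<in>V. \<Sum>K\<in>outer_independent_sets V E v. h (v, K))" for h
    unfolding P_def using fin by (simp add: sum.Sigma finite_outer_independent_sets)
  define S where "S = (\<Sum>J\<in>independent_sets V E. card J * x ^ card J)"
  define W where "W = (\<Sum>p\<in>P. a p * (x + (1 + x) ^ Y p))"
  have S: "(\<Sum>p\<in>P. a p * x) = S"
    using sum_vertices_occupied_weight[OF fin, where E = E and x = x]
    by (simp add: sum_P a_def S_def occupied_weight_local_view[OF G T])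
  have "W = (\<Sum>v\<in>V. indep_poly V E x)"
    unfolding W_def sum_P
    by (intro sum.cong refl) (simp add: a_def Y_def indep_poly_local_view[OF G T])
  then have W: "W = card V * indep_poly V E x" by simp
  have neighbours: "(\<Sum>p\<in>P. a p * (Y p * x * (1 + x) ^ Y p)) \<le> (1 + x) * d * S"
    using sum_local_views_uncovered_le[OF G T deg x] by (simp add: sum_P a_def Y_def S_def)
  have "0 < W"
    using indep_poly_ge_1[OF fin, where E = E and x = x] x V fin by (simp add: W card_gt_0_iff)
  moreover have "\<alpha> = S / W"
    by (simp add: \<alpha>_def alpha_bar_eq[OF fin] S_def W mult.commute)
  moreover have "finite P" using fin by (simp add: P_def finite_outer_independent_sets)
  moreover have "Y p \<le> d" if p: "p \<in> P" for p
  proof -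
    obtain v K where "p = (v, K)" "v \<in> V" using p by (auto simp: P_def)
    then show ?thesis
      using deg card_uncovered_le_vdegree[OF fin, of E v K] by (auto simp: Y_def)
  qed
  ultimately show ?thesis
    using xexp_bound_of_local_views[where P = P and a = a and x = x and Y = Y and d = d,
        folded W_def, unfolded S] x neighbours
    by (simp add: a_def split: prod.splits)
qed

lemma power_cross_diff_nonpos:
  fixes x y :: real
  assumes "0 < x" "x \<le> y"
  shows "(real a - real b) * (x ^ a * y ^ b - y ^ a * x ^ b) \<le> 0"
proof -
  have le: "x ^ a * y ^ b \<le> y ^ a * x ^ b" if "b \<le> a" for a b :: nat
  proof -
    obtain k where k: "a = b + k" using \<open>b \<le> a\<close> le_Suc_ex by blast
    have "x ^ b * y ^ b * x ^ k \<le> x ^ b * y ^ b * y ^ k"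
      using assms by (intro mult_left_mono power_mono) auto
    then show ?thesis by (simp add: k power_add mult_ac)
  qed
  show ?thesis
  proof (cases "a \<le> b")
    case True
    then have "y ^ a * x ^ b \<le> x ^ a * y ^ b" using le[of a b] by (simp add: mult.commute)
    then show ?thesis using True by (intro mult_nonpos_nonneg) auto
  next
    case False
    then show ?thesis using le[of b a] by (intro mult_nonneg_nonpos) auto
  qed
qed

text \<open>After cross-multiplying, twice the difference is a sum over pairs of nonpositive terms.\<close>
lemma weighted_mean_exponent_mono:
  fixes x y :: real and m :: "'a \<Rightarrow> nat"
  assumes I: "finite I" and x: "0 < x" "x \<le> y"
  shows "(\<Sum>J\<in>I. m J * x ^ m J) / (\<Sum>J\<in>I. x ^ m J) \<le> (\<Sum>J\<in>I. m J * y ^ m J) / (\<Sum>J\<in>I. y ^ m J)"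
proof (cases "I = {}")
  case False
  define D where "D = (\<Sum>J\<in>I. \<Sum>K\<in>I. m J * (x ^ m J * y ^ m K - y ^ m J * x ^ m K))"
  have "D + D = (\<Sum>J\<in>I. \<Sum>K\<in>I. (real (m J) - m K) * (x ^ m J * y ^ m K - y ^ m J * x ^ m K))"
    unfolding D_def
    by (subst (2) sum.swap) (simp add: algebra_simps sum_subtractf flip: sum.distrib)
  also have "\<dots> \<le> 0"
    by (intro sum_nonpos power_cross_diff_nonpos x)
  finally have "D \<le> 0" by simp
  moreover have "D = (\<Sum>J\<in>I. m J * x ^ m J) * (\<Sum>J\<in>I. y ^ m J) - (\<Sum>J\<in>I. m J * y ^ m J) * (\<Sum>J\<in>I. x ^ m J)"
    by (simp add: D_def sum_subtractf sum_distrib_left sum_distrib_right right_diff_distrib mult_ac)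
  ultimately have "(\<Sum>J\<in>I. m J * x ^ m J) * (\<Sum>J\<in>I. y ^ m J) \<le> (\<Sum>J\<in>I. m J * y ^ m J) * (\<Sum>J\<in>I. x ^ m J)"
    by simp
  moreover have "0 < (\<Sum>J\<in>I. x ^ m J)" "0 < (\<Sum>J\<in>I. y ^ m J)"
    using I False x by (auto intro!: sum_pos)
  ultimately show ?thesis by (simp add: divide_simps mult.commute)
qed simp

lemma alpha_bar_mono:
  fixes x y :: real
  assumes "finite V" "0 < x" "x \<le> y"
  shows "alpha_bar V E x \<le> alpha_bar V E y"
  using weighted_mean_exponent_mono[OF finite_independent_sets[OF assms(1)] assms(2,3), of card]
  by (simp add: alpha_bar_eq[OF assms(1)] indep_poly_def)

lemma alpha_bar_nonneg:
  fixes x :: real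
  assumes "finite V" "0 \<le> x"
  shows "0 \<le> alpha_bar V E x"
  using indep_poly_ge_1[OF assms, of E] assms
  by (auto simp: alpha_bar_eq[OF assms(1)] intro!: divide_nonneg_nonneg sum_nonneg)

section \<open>The occupancy fraction of the tree\<close>

definition tree_fugacity :: "nat \<Rightarrow> real \<Rightarrow> real" where
  "tree_fugacity d a = a / (1 - a) * ((1 - a) / (1 - 2 * a)) ^ d"

lemma tree_fugacity_strict_mono:
  assumes "0 < a" "a < b" "b < 1/2"
  shows "tree_fugacity d a < tree_fugacity d b"
proof -
  have "a * (1 - b) < b * (1 - a)" using assms by (simp add: algebra_simps)
  then have "a / (1 - a) < b / (1 - b)" using assms by (simp add: frac_less_eq divide_neg_pos)
  then have "a / (1 - a) * ((1 - a) / (1 - 2 * a)) ^ d < b / (1 - b) * ((1 - a) / (1 - 2 * a)) ^ d"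
    using assms by (intro mult_strict_right_mono) auto
  also have "\<dots> \<le> b / (1 - b) * ((1 - b) / (1 - 2 * b)) ^ d"
  proof (intro mult_left_mono power_mono)
    have "(1 - a) * (1 - 2 * b) \<le> (1 - b) * (1 - 2 * a)" using assms by (simp add: algebra_simps)
    then show "(1 - a) / (1 - 2 * a) \<le> (1 - b) / (1 - 2 * b)"
      using assms by (simp add: frac_le_eq divide_nonpos_pos)
  qed (use assms in auto)
  finally show ?thesis by (simp add: tree_fugacity_def)
qed

lemma tree_fugacity_surj:
  assumes d: "1 \<le> d" and lam: "0 < lam"
  shows "\<exists>a. 0 < a \<and> a < 1/2 \<and> tree_fugacity d a = lam"
proof -
  define a0 where "a0 = min (1/4) (lam / 2 ^ (d + 1))"
  define a1 where "a1 = (lam + 1) / (2 * lam + 3)"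
  have a0: "0 < a0" "a0 \<le> 1/4" "a0 * 2 ^ (d + 1) \<le> lam"
    using lam by (auto simp: a0_def min_def pos_le_divide_eq)
  have a1: "1/4 \<le> a1" "a1 < 1/2" using lam by (simp_all add: a1_def divide_simps)
  have "tree_fugacity d a0 \<le> 2 * a0 * 2 ^ d"
    unfolding tree_fugacity_def using a0
    by (intro mult_mono power_mono) (auto simp: field_simps)
  also have "\<dots> \<le> lam" using a0 by (simp add: mult_ac)
  finally have "tree_fugacity d a0 \<le> lam" .
  moreover have "lam \<le> tree_fugacity d a1"
  proof -
    have q: "1 \<le> (1 - a1) / (1 - 2 * a1)" using a1 by (simp add: field_simps)
    have "1 - 2 * a1 = 1 / (2 * lam + 3)" using lam by (simp add: a1_def divide_simps)
    then have "a1 / (1 - a1) * ((1 - a1) / (1 - 2 * a1)) = lam + 1"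
      using a1 lam by (simp add: a1_def)
    then have "lam \<le> a1 / (1 - a1) * ((1 - a1) / (1 - 2 * a1))" by simp
    also have "\<dots> \<le> tree_fugacity d a1"
      unfolding tree_fugacity_def using q d a1
      by (intro mult_left_mono) (auto intro: order_trans[OF _ power_increasing[of 1 d]])
    finally show ?thesis .
  qed
  moreover have "continuous_on {a0..a1} (tree_fugacity d)"
    unfolding tree_fugacity_def using a1 by (intro continuous_intros) auto
  ultimately obtain a where "a0 \<le> a" "a \<le> a1" "tree_fugacity d a = lam"
    using IVT'[of "tree_fugacity d" a0 lam a1] a0 a1 by auto
  then show ?thesis using a0 a1 by (intro exI[of _ a]) auto
qed

lemma alpha_T_spec:
  assumes "1 \<le> d" "0 < lam"
  shows "0 < alpha_T d lam" "alpha_T d lam < 1/2" "tree_fugacity d (alpha_T d lam) = lam"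
proof -
  have "\<exists>!a. 0 < a \<and> a < 1/2 \<and> lam = tree_fugacity d a"
  proof (rule ex_ex1I)
    show "\<exists>a. 0 < a \<and> a < 1/2 \<and> lam = tree_fugacity d a"
      using tree_fugacity_surj[OF assms] by auto
    show "a = b" if "0 < a \<and> a < 1/2 \<and> lam = tree_fugacity d a"
      and "0 < b \<and> b < 1/2 \<and> lam = tree_fugacity d b" for a b
      using that tree_fugacity_strict_mono[of a b d] tree_fugacity_strict_mono[of b a d]
      by (cases a b rule: linorder_cases) auto
  qed
  from theI'[OF this] show "0 < alpha_T d lam" "alpha_T d lam < 1/2" "tree_fugacity d (alpha_T d lam) = lam"
    by (simp_all add: alpha_T_def tree_fugacity_def)
qed

lemma alpha_T_xexp_le:
  assumes "1 \<le> d" "0 < lam"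
  shows "d * alpha_T d lam * exp (d * alpha_T d lam) \<le> lam * d"
proof -
  define a where "a = alpha_T d lam"
  have a: "0 < a" "a < 1/2" "tree_fugacity d a = lam" using alpha_T_spec[OF assms] by (simp_all add: a_def)
  have "exp a \<le> 1 / (1 - a)"
    using exp_ge_add_one_self[of "- a"] a by (simp add: exp_minus field_simps)
  also have "\<dots> \<le> (1 - a) / (1 - 2 * a)"
    using a by (simp add: field_simps power2_eq_square)
  finally have "exp (d * a) \<le> ((1 - a) / (1 - 2 * a)) ^ d"
    by (simp add: exp_of_nat_mult power_mono)
  moreover have "a \<le> a / (1 - a)" using a by (simp add: field_simps)
  ultimately have "a * exp (d * a) \<le> tree_fugacity d a"
    unfolding tree_fugacity_def using a by (intro mult_mono) auto
  then have "d * (a * exp (d * a)) \<le> d * lam" using a by (intro mult_left_mono) simp_all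
  then show ?thesis by (simp add: a_def mult_ac)
qed

section \<open>Comparison with the tree\<close>

lemma occupancy_fraction_ge_of_xexp_le:
  fixes x t :: real
  assumes G: "simple_graph V E" and T: "triangle_free V E"
    and deg: "\<forall>u\<in>V. vdegree V E u \<le> d" and V: "V \<noteq> {}" and x: "0 < x"
    and t: "t * exp t \<le> d * (x / (1 + x))"
  shows "t \<le> (1 + x)\<^sup>2 * d * (alpha_bar V E x / card V)"
proof (rule mult_exp_le_imp_le)
  have "finite V" using G by (simp add: simple_graph_def)
  then show "0 \<le> (1 + x)\<^sup>2 * d * (alpha_bar V E x / card V)"
    using alpha_bar_nonneg[of V x E] x by simp
  show "t * exp t \<le> (1 + x)\<^sup>2 * d * (alpha_bar V E x / card V) * exp ((1 + x)\<^sup>2 * d * (alpha_bar V E x / card V))"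
    using t occupancy_fraction_xexp_bound[OF G T deg V x] by linarith
qed

lemma occupancy_fraction_small_fugacity:
  fixes lam \<delta> A :: real
  assumes G: "simple_graph V E" and T: "triangle_free V E"
    and deg: "\<forall>u\<in>V. vdegree V E u \<le> d" and V: "V \<noteq> {}"
    and lam: "0 < lam" "lam \<le> \<delta>" and A: "0 \<le> A" "A * exp A \<le> lam * d"
  shows "A \<le> (1 + \<delta>) ^ 3 * d * (alpha_bar V E lam / card V)"
proof -
  have fin: "finite V" using G by (simp add: simple_graph_def)
  have \<delta>: "0 < 1 + \<delta>" using lam by simp
  have "A / (1 + \<delta>) * exp (A / (1 + \<delta>)) \<le> A / (1 + \<delta>) * exp A"
    using A lam mult_left_mono[of 1 "1 + \<delta>" A] by (intro mult_left_mono) (auto simp: divide_le_eq)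
  also have "\<dots> \<le> lam * d / (1 + \<delta>)"
    using A \<delta> by (simp add: divide_right_mono)
  also have "\<dots> \<le> d * (lam / (1 + lam))"
    using lam by (simp add: frac_le mult.commute)
  finally have "A / (1 + \<delta>) \<le> (1 + lam)\<^sup>2 * d * (alpha_bar V E lam / card V)"
    by (rule occupancy_fraction_ge_of_xexp_le[OF G T deg V lam(1)])
  also have "\<dots> \<le> (1 + \<delta>)\<^sup>2 * d * (alpha_bar V E lam / card V)"
    using lam alpha_bar_nonneg[OF fin, of lam E]
    by (intro mult_right_mono power_mono) auto
  finally show ?thesis using \<delta> by (simp add: divide_le_eq power3_eq_cube power2_eq_square mult_ac)
qed

text \<open>Here the graph bound is applied at the fugacity \<open>1 / L\<close>; since the tree occupancy satisfies
  \<open>A \<le> L\<close>, this costs only the factor \<open>1 - 3 ln L / L\<close>.\<close>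
lemma occupancy_fraction_large_fugacity:
  fixes lam C L A :: real
  assumes G: "simple_graph V E" and T: "triangle_free V E"
    and deg: "\<forall>u\<in>V. vdegree V E u \<le> d" and V: "V \<noteq> {}"
    and C: "1 \<le> C" "lam \<le> C" and L: "2 * C \<le> L" "exp L = C * d" and lam: "1 / L \<le> lam"
    and A: "0 \<le> A" "A * exp A \<le> lam * d"
  shows "(1 - 3 * ln L / L) * A \<le> (1 + 1 / L) ^ 3 * d * (alpha_bar V E lam / card V)"
proof -
  define s where "s = 1 - 3 * ln L / L"
  define \<delta> where "\<delta> = 1 / L"
  have fin: "finite V" using G by (simp add: simple_graph_def)
  have L2: "2 \<le> L" using C L by simp
  have \<delta>: "0 < \<delta>" using L2 by (simp add: \<delta>_def)
  have "0 < lam" using \<delta> lam unfolding \<delta>_def by linarith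
  then have R: "0 \<le> alpha_bar V E lam / card V"
    using alpha_bar_nonneg[OF fin, of lam E] by simp
  have "A \<le> L"
  proof (rule ccontr)
    assume "\<not> A \<le> L"
    then have "exp L < exp A" "1 \<le> A" using L2 by auto
    moreover from \<open>1 \<le> A\<close> have "exp A \<le> A * exp A"
      using mult_right_mono[of 1 A "exp A"] by simp
    ultimately have "exp L < A * exp A" by linarith
    also have "\<dots> \<le> C * d" using A C by (meson mult_right_mono of_nat_0_le_iff order.trans)
    finally show False using L by simp
  qed
  have "s * A \<le> (1 + \<delta>) ^ 3 * d * (alpha_bar V E lam / card V)"
  proof (cases "s \<le> 0")
    case True
    then have "s * A \<le> 0" using A by (simp add: mult_nonpos_nonneg)
    also have "0 \<le> (1 + \<delta>) ^ 3 * (d * (alpha_bar V E lam / card V))"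
      using R \<delta> by (intro mult_nonneg_nonneg) auto
    finally show ?thesis by (simp add: mult.assoc)
  next
    case False
    have "s * A * exp (s * A) \<le> s * L * exp (s * L)"
      using False A \<open>A \<le> L\<close> by (intro mult_exp_mono) (auto intro: mult_left_mono)
    also have "\<dots> \<le> L * exp (s * L)"
    proof -
      have "s \<le> 1" using L2 by (simp add: s_def)
      then show ?thesis using L2 mult_right_mono[of s 1 "L * exp (s * L)"] by (simp add: mult.assoc)
    qed
    also have "\<dots> = C * d / L\<^sup>2"
    proof -
      have "s * L = L - 3 * ln L" using L2 by (simp add: s_def algebra_simps)
      then have "exp (s * L) = exp L / exp (ln L) ^ 3" by (simp add: exp_diff flip: exp_of_nat_mult)
      then show ?thesis using L L2 by (simp add: power2_eq_square power3_eq_cube)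
    qed
    also have "\<dots> \<le> d * (\<delta> / (1 + \<delta>))"
    proof -
      have "C * (L + 1) \<le> C * (2 * L)" using C L2 by (intro mult_left_mono) auto
      also have "\<dots> \<le> L * L" using L L2 mult_right_mono[of "2 * C" L L] by simp
      finally have "C * d * (L + 1) \<le> d * L\<^sup>2"
        using mult_left_mono[of "C * (L + 1)" "L * L" d] by (simp add: power2_eq_square mult_ac)
      then have "C * d / L\<^sup>2 \<le> d / (L + 1)" using L2 by (simp add: divide_simps)
      moreover have "\<delta> / (1 + \<delta>) = 1 / (L + 1)" using L2 by (simp add: \<delta>_def divide_simps)
      ultimately show ?thesis by simp
    qed
    finally have "s * A \<le> (1 + \<delta>)\<^sup>2 * d * (alpha_bar V E \<delta> / card V)"
      by (rule occupancy_fraction_ge_of_xexp_le[OF G T deg V \<delta>])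
    also have "\<dots> \<le> (1 + \<delta>)\<^sup>2 * d * (alpha_bar V E lam / card V)"
      using alpha_bar_mono[OF fin \<delta>, of lam E] lam
      by (intro mult_left_mono divide_right_mono) (auto simp: \<delta>_def)
    also have "\<dots> \<le> (1 + \<delta>) ^ 3 * d * (alpha_bar V E lam / card V)"
      using R \<delta> by (intro mult_right_mono) (auto intro: power_increasing)
    finally show ?thesis .
  qed
  then show ?thesis unfolding s_def \<delta>_def .
qed

definition occupancy_error :: "real \<Rightarrow> real" where
  "occupancy_error L = 1 - (1 - 3 * ln L / L) / (1 + 1 / L) ^ 3"

lemma occupancy_fraction_ge_alpha_T:
  fixes C lam :: real and d :: nat
  defines "L \<equiv> ln (C * d)"
  assumes G: "simple_graph V E" and T: "triangle_free V E" and md: "max_degree V E d"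
    and d: "1 \<le> d" and lam: "0 < lam" "lam \<le> C" and C: "1 \<le> C" and L: "2 * C \<le> L"
  shows "(1 - occupancy_error L) * alpha_T d lam \<le> alpha_bar V E lam / card V"
proof -
  define A where "A = d * alpha_T d lam"
  have deg: "\<forall>u\<in>V. vdegree V E u \<le> d" and V: "V \<noteq> {}"
    using md by (auto simp: max_degree_def)
  have A: "0 \<le> A" "A * exp A \<le> lam * d"
    using alpha_T_spec[OF d lam(1)] alpha_T_xexp_le[OF d lam(1)] by (simp_all add: A_def)
  have L2: "2 \<le> L" using C L by simp
  have "exp L = C * d" using C d by (simp add: L_def)
  have "(1 - 3 * ln L / L) * A \<le> (1 + 1 / L) ^ 3 * d * (alpha_bar V E lam / card V)"
  proof (cases "lam \<le> 1 / L")
    case True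
    have "(1 - 3 * ln L / L) * A \<le> A"
      using A L2 mult_right_mono[of "1 - 3 * ln L / L" 1 A] by simp
    also have "\<dots> \<le> (1 + 1 / L) ^ 3 * d * (alpha_bar V E lam / card V)"
      using occupancy_fraction_small_fugacity[OF G T deg V lam(1) True A] .
    finally show ?thesis .
  next
    case False
    then show ?thesis
      using occupancy_fraction_large_fugacity[OF G T deg V C lam(2) L \<open>exp L = C * d\<close> _ A] by simp
  qed
  moreover have "0 < (1 + 1 / L) ^ 3 * d" using L2 d by (simp add: add_pos_nonneg)
  ultimately have "(1 - 3 * ln L / L) * A / ((1 + 1 / L) ^ 3 * d) \<le> alpha_bar V E lam / card V"
    by (simp add: pos_divide_le_eq mult_ac)
  then show ?thesis using d by (simp add: A_def occupancy_error_def)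
qed

lemma occupancy_error_tendsto_0: "(occupancy_error \<longlongrightarrow> 0) at_top"
proof -
  have "((\<lambda>L::real. 1 / L) \<longlongrightarrow> 0) at_top"
    using tendsto_inverse_0_at_top[OF filterlim_ident] by (simp add: inverse_eq_divide)
  then have "((\<lambda>L::real. 1 - (1 - 3 * (ln L / L)) / (1 + 1 / L) ^ 3) \<longlongrightarrow> 1 - (1 - 3 * 0) / (1 + 0) ^ 3) at_top"
    by (intro tendsto_intros ln_x_over_x_tendsto_0) simp_all
  then show ?thesis by (simp add: occupancy_error_def[abs_def])
qed

theorem proposition4p1:
  fixes lam :: "nat \<Rightarrow> real"
  assumes pos: "\<forall>d\<ge>2. lam d > 0"
    and bdd: "\<exists>C. \<forall>d\<ge>2. lam d \<le> C"
  shows "\<exists>eps :: nat \<Rightarrow> real. eps \<longlonglongrightarrow> 0 \<and>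
    (\<forall>d\<ge>2. \<forall>V E. simple_graph V E \<and> triangle_free V E \<and> max_degree V E d \<longrightarrow>
        alpha_bar V E (lam d) / real (card V) \<ge> (1 - eps d) * alpha_T d (lam d))"
proof -
  obtain C where C: "1 \<le> C" "\<And>d. 2 \<le> d \<Longrightarrow> lam d \<le> C"
    using bdd by (metis max.cobounded1 max.coboundedI2)
  define L where "L d = ln (C * real d)" for d :: nat
  define eps where "eps d = (if 2 * C \<le> L d then occupancy_error (L d) else 1)" for d
  have L: "filterlim L at_top sequentially"
    unfolding L_def using C(1)
    by (intro filterlim_compose[OF ln_at_top] filterlim_tendsto_pos_mult_at_top[OF tendsto_const]
        filterlim_real_sequentially) auto
  have "\<forall>\<^sub>F d in sequentially. 2 * C \<le> L d" using L by (simp add: filterlim_at_top)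
  then have "\<forall>\<^sub>F d in sequentially. occupancy_error (L d) = eps d"
    by eventually_elim (simp add: eps_def)
  then have "eps \<longlonglongrightarrow> 0"
    by (rule Lim_transform_eventually[OF filterlim_compose[OF occupancy_error_tendsto_0 L]])
  moreover have "(1 - eps d) * alpha_T d (lam d) \<le> alpha_bar V E (lam d) / card V"
    if "2 \<le> d" "simple_graph V E" "triangle_free V E" "max_degree V E d" for d V E
    using that occupancy_fraction_ge_alpha_T[of V E d "lam d" C] pos C
      alpha_bar_nonneg[of V "lam d" E]
    by (auto simp: eps_def L_def simple_graph_def)
  ultimately show ?thesis by blast
qed

end
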